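(* Let $U_n\in U(n)$ be a unitary matrix whose eigenvalues are pairwise distinct and different from $1$, with characteristic polynomial $Z_n(X)=\det(X-U_n)$, eigenangles $(\theta_k^{(n)})_{k\in\mathbb{Z}}$ and renormalized eigenangles $y_k^{(n)}=\frac{n}{2\pi}\theta_k^{(n)}$ as in the context. Let $k\in\mathbb{Z}$ and let $\varepsilon>0$ be small enough that there is no eigenangle of $U_n$ in $[0,\varepsilon]$ nor in $(\theta_k^{(n)},\theta_k^{(n)}+\varepsilon]$. Then $$k = y_k^{(n)} - \frac{1}{\pi}\Im\left( \log Z_n\big(e^{i(\theta_k^{(n)}+\varepsilon)}\big) - \log Z_n\big(e^{i\varepsilon}\big)\right).$$
   Context: $(\theta_k^{(n)})_{k\in\mathbb{Z}}$ is the increasing enumeration of all real numbers $\theta$ such that $e^{i\theta}$ is an eigenvalue of $U_n$, indexed so that $\dots<\theta_0^{(n)}<0<\theta_1^{(n)}<\dots$; thus $\theta_{k+n}^{(n)}=\theta_k^{(n)}+2\pi$. An eigenangle means any $\theta_k^{(n)}$. Let $\mathcal{D} = \mathbb{C} \setminus \{ r e^{i\theta_k^{(n)}} : k\in\mathbb{Z}, r\ge1\}$; $\log Z_n$ is the unique continuous determination of the logarithm of $Z_n$ on $\mathcal{D}$ with $\log Z_n(0) \in i(-\pi,\pi]$. *)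

theory Defs
  imports "HOL-Analysis.Analysis"
begin

definition conj_transpose :: "complex^'n^'m \<Rightarrow> complex^'m^'n" where
  "conj_transpose U = (\<chi> i j. cnj (U $ j $ i))"

definition unitary_mat :: "complex^'n^'n \<Rightarrow> bool" where
  "unitary_mat U \<longleftrightarrow> U ** conj_transpose U = mat 1 \<and> conj_transpose U ** U = mat 1"

definition is_eigenvalue :: "complex^'n^'n \<Rightarrow> complex \<Rightarrow> bool" where
  "is_eigenvalue U z \<longleftrightarrow> (\<exists>v. v \<noteq> 0 \<and> U *v v = z *s v)"

definition charpoly_Z :: "complex^'n^'n \<Rightarrow> complex \<Rightarrow> complex" where
  "charpoly_Z U z = det (mat z - U)"

definition eigenangle :: "complex^'n^'n \<Rightarrow> int \<Rightarrow> real" where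
  "eigenangle U = (THE f. strict_mono f \<and> range f = {t. is_eigenvalue U (cis t)}
                        \<and> f 0 < 0 \<and> 0 < f 1)"

definition renorm_eigenangle :: "complex^'n^'n \<Rightarrow> int \<Rightarrow> real" where
  "renorm_eigenangle U k = real CARD('n) / (2 * pi) * eigenangle U k"

definition slit_domain :: "complex^'n^'n \<Rightarrow> complex set" where
  "slit_domain U = - {complex_of_real r * cis (eigenangle U k) | r k. r \<ge> 1}"

definition logZ :: "complex^'n^'n \<Rightarrow> complex \<Rightarrow> complex" where
  "logZ U = (THE L. continuous_on (slit_domain U) L
               \<and> (\<forall>z\<in>slit_domain U. exp (L z) = charpoly_Z U z)
               \<and> (\<exists>t\<in>{-pi<..pi}. L 0 = \<i> * complex_of_real t)
               \<and> (\<forall>z. z \<notin> slit_domain U \<longrightarrow> L z = 0))"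

end

theory Submission
  imports Defs "HOL-Computational_Algebra.Polynomial"
begin

text \<open>
  The eigenvalues \<open>w\<^sub>j = cis \<theta>\<^sub>j\<close> lie on the unit circle, so
  \<open>Z(z) = Z(0) * (\<Prod>j. 1 - z / w\<^sub>j)\<close> and \<open>Ln Z(0) + (\<Sum>j. Ln (1 - z / w\<^sub>j))\<close>
  (principal branches) is a continuous logarithm of \<open>Z\<close> on the star-shaped slit domain
  with the prescribed value at 0; by uniqueness of continuous logarithms it is \<open>log Z\<close>.
  On the circle, \<open>Im (Ln (1 - cis x)) = (x - pi) / 2\<close> for \<open>0 < x < 2 pi\<close>, a sawtooth
  dropping by \<open>pi\<close> whenever \<open>x\<close> crosses a multiple of \<open>2 pi\<close>. Going from
  \<open>cis \<epsilon>\<close> to \<open>cis (\<theta>\<^sub>k + \<epsilon>)\<close>, the argument of each of the \<open>n\<close> factors grows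
  by \<open>\<theta>\<^sub>k / 2\<close>, minus \<open>pi\<close> for each eigenangle passed; the eigenangles passed are
  \<open>\<theta>\<^sub>1, \<dots>, \<theta>\<^sub>k\<close> (counted negatively when \<open>k \<le> 0\<close>). So \<open>Im log Z\<close> grows
  by \<open>n \<theta>\<^sub>k / 2 - k pi\<close>.
\<close>

section \<open>Unitary matrices and the characteristic polynomial\<close>

lemma mat_mult_vector: "mat c *v v = c *s (v :: 'a::comm_semiring_1^'n)"
  by (simp add: vec_eq_iff matrix_vector_mult_def mat_def if_distrib[of "\<lambda>x. x * _"]
      cong: if_cong)

lemma det_eq_0_if_kernel:
  fixes A :: "'a::field^'n^'n"
  assumes "A *v v = 0" "v \<noteq> 0"
  shows "det A = 0"
  using assms inj_matrix_vector_mult[of A] invertible_det_nz[of A]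
  by (metis injD matrix_vector_mult_0_right)

lemma charpoly_Z_eigenvalue:
  assumes "is_eigenvalue U z"
  shows "charpoly_Z U z = 0"
proof -
  obtain v where "v \<noteq> 0" "U *v v = z *s v" using assms unfolding is_eigenvalue_def by blast
  then show ?thesis
    unfolding charpoly_Z_def
    by (intro det_eq_0_if_kernel[of _ v])
       (simp_all add: matrix_vector_mult_diff_rdistrib mat_mult_vector)
qed

lemma sum_mult_matrix_vector:
  fixes x :: "'a::comm_semiring_1^'n"
  shows "(\<Sum>i\<in>UNIV. x$i * (A *v y)$i) = (\<Sum>j\<in>UNIV. (x v* A)$j * y$j)"
  by (simp add: matrix_vector_mult_def vector_matrix_mult_def sum_distrib_left sum_distrib_right
      mult.assoc) (rule sum.swap)

lemma sum_cnj_mult_self: "(\<Sum>i\<in>UNIV. cnj (v$i) * v$i) = complex_of_real ((norm v)\<^sup>2)"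
proof -
  have "(\<Sum>i\<in>UNIV. cnj (v$i) * v$i) = (\<Sum>i\<in>UNIV. complex_of_real ((cmod (v$i))\<^sup>2))"
    by (metis complex_norm_square mult.commute)
  also have "\<dots> = complex_of_real (\<Sum>i\<in>UNIV. (cmod (v$i))\<^sup>2)"
    by (rule of_real_sum[symmetric])
  also have "\<dots> = complex_of_real ((norm v)\<^sup>2)"
    by (simp add: norm_vec_def L2_set_def sum_nonneg)
  finally show ?thesis .
qed

lemma cnj_matrix_vector_mult:
  "cnj ((U *v v)$i) = ((\<chi> i. cnj (v$i)) v* conj_transpose U)$i"
  by (simp add: matrix_vector_mult_def vector_matrix_mult_def conj_transpose_def
      cnj_sum mult.commute)

lemma unitary_norm_preserving:
  assumes "unitary_mat U" shows "norm (U *v v) = norm v"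
proof -
  let ?w = "\<chi> i. cnj (v$i)"
  have "complex_of_real ((norm (U *v v))\<^sup>2) = (\<Sum>i\<in>UNIV. cnj ((U *v v)$i) * (U *v v)$i)"
    by (rule sum_cnj_mult_self[symmetric])
  also have "\<dots> = (\<Sum>i\<in>UNIV. (?w v* (conj_transpose U ** U))$i * v$i)"
    by (simp only: cnj_matrix_vector_mult sum_mult_matrix_vector vector_matrix_mul_assoc)
  also have "\<dots> = complex_of_real ((norm v)\<^sup>2)"
    using assms by (simp add: unitary_mat_def sum_cnj_mult_self)
  finally show ?thesis by (simp only: of_real_eq_iff power2_eq_iff_nonneg norm_ge_zero)
qed

lemma norm_vector_smult: "norm (c *s v) = cmod c * norm (v :: complex^'n)"
  by (simp add: norm_vec_def L2_set_right_distrib norm_mult)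

lemma unitary_eigenvalue_norm:
  assumes "unitary_mat U" "is_eigenvalue U z" shows "cmod z = 1"
proof -
  obtain v where "v \<noteq> 0" "U *v v = z *s v" using assms(2) unfolding is_eigenvalue_def by blast
  then have "norm v = cmod z * norm v"
    using unitary_norm_preserving[OF assms(1), of v] by (simp add: norm_vector_smult)
  then show ?thesis using \<open>v \<noteq> 0\<close> by simp
qed

definition charpoly :: "'a::comm_ring_1^'n^'n \<Rightarrow> 'a poly" where
  "charpoly A = det (mat [:0, 1:] - (\<chi> i j. [:A$i$j:]))"

lemma charpoly_matrix_nth:
  fixes A :: "'a::idom^'n^'n"
  shows "(mat [:0, 1:] - (\<chi> i j. [:A$i$j:])) $ i $ j
    = (if i = j then [:- (A$i$j), 1:] else [:- (A$i$j):])"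
  by (auto simp: mat_def)

lemma poly_charpoly:
  fixes A :: "'a::idom^'n^'n"
  shows "poly (charpoly A) z = det (mat z - A)"
  unfolding charpoly_def det_def charpoly_matrix_nth
  by (auto simp: poly_sum poly_prod mat_def if_distrib[of "\<lambda>q. poly q z"]
      intro!: sum.cong prod.cong)

lemma degree_charpoly_term:
  fixes A :: "'a::idom^'n^'n"
  shows "degree (of_int (sign p) * (\<Prod>i\<in>UNIV. (mat [:0, 1:] - (\<chi> i j. [:A$i$j:])) $ i $ p i))
    \<le> card {i. p i = i}"
proof -
  have "degree (of_int (sign p) * (\<Prod>i\<in>UNIV. (mat [:0, 1:] - (\<chi> i j. [:A$i$j:])) $ i $ p i))
        \<le> (\<Sum>i\<in>UNIV. (if p i = i then 1 else 0))"
    unfolding charpoly_matrix_nth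
    by (rule order.trans[OF degree_mult_le], simp,
        rule order.trans[OF degree_prod_sum_le sum_mono]) auto
  also have "\<dots> = card {i. p i = i}"
    by (simp add: sum.If_cases)
  finally show ?thesis .
qed

lemma degree_charpoly: "degree (charpoly (A :: 'a::idom^'n^'n)) \<le> CARD('n)"
  unfolding charpoly_def det_def
  by (intro degree_sum_le order.trans[OF degree_charpoly_term]) (auto intro: card_mono)

lemma coeff_charpoly_card:
  "coeff (charpoly (A :: 'a::idom^'n^'n)) CARD('n) = 1"
proof -
  let ?M = "mat [:0, 1:] - (\<chi> i j. [:A$i$j:])"
  have "coeff (of_int (sign p) * (\<Prod>i\<in>UNIV. ?M $ i $ p i)) CARD('n) = (if p = id then 1 else 0)"
    if "p permutes UNIV" for p
  proof (cases "p = id")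
    case True
    have "degree (\<Prod>i\<in>(UNIV::'n set). [:- (A$i$i), 1:]) = CARD('n)"
      by (subst degree_prod_eq_sum_degree) auto
    then show ?thesis
      using True lead_coeff_prod[of "\<lambda>i. [:- (A$i$i), 1:]" UNIV]
      unfolding charpoly_matrix_nth by (simp add: sign_id)
  next
    case False
    then obtain j where "p j \<noteq> j" by (metis eq_id_iff)
    then have "card {i. p i = i} < CARD('n)" by (intro psubset_card_mono) auto
    then show ?thesis
      using False degree_charpoly_term[of p A] by (simp add: coeff_eq_0)
  qed
  then have "coeff (charpoly A) CARD('n)
      = (\<Sum>p | p permutes (UNIV::'n set). if p = id then 1 else 0)"
    unfolding charpoly_def det_def coeff_sum by (intro sum.cong) auto
  also have "\<dots> = 1"
    by (simp add: permutes_id)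
  finally show ?thesis .
qed

lemma charpoly_eq_prod_roots:
  fixes A :: "'a::idom^'n^'n"
  assumes "finite E" "card E = CARD('n)" "\<And>w. w \<in> E \<Longrightarrow> det (mat w - A) = 0"
  shows "charpoly A = (\<Prod>w\<in>E. [:- w, 1:])"
proof -
  have deg: "degree (\<Prod>w\<in>E. [:- w, 1:]) = CARD('n)"
    using assms(2) by (subst degree_prod_eq_sum_degree) auto
  show ?thesis
  proof (rule poly_eqI_degree_lead_coeff[of _ "CARD('n)" _ E])
    show "coeff (charpoly A) CARD('n) = coeff (\<Prod>w\<in>E. [:- w, 1:]) CARD('n)"
      using deg lead_coeff_prod[of "\<lambda>w. [:- w, 1:]" E] by (simp add: coeff_charpoly_card)
    show "poly (charpoly A) w = poly (\<Prod>w\<in>E. [:- w, 1:]) w" if "w \<in> E" for w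
      using assms that by (simp add: poly_charpoly poly_prod prod_zero_iff)
  qed (use assms deg degree_charpoly in auto)
qed

section \<open>Integer-indexed enumerations\<close>

lemma strict_mono_range_subset_next:
  fixes f g :: "int \<Rightarrow> 'a::linorder"
  assumes "strict_mono f" "strict_mono g" "range f \<subseteq> range g" "f k = g k"
  shows "g (k + 1) \<le> f (k + 1)" "f (k - 1) \<le> g (k - 1)"
proof -
  obtain j where j: "f (k + 1) = g j" using assms(3) by blast
  have "g k < g j" using j assms(4) strict_monoD[OF assms(1), of k "k + 1"] by simp
  then have "k + 1 \<le> j" using strict_mono_less[OF assms(2)] by fastforce
  then show "g (k + 1) \<le> f (k + 1)" using j strict_mono_less_eq[OF assms(2)] by metis
next
  obtain j where j: "f (k - 1) = g j" using assms(3) by blast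
  have "g j < g k" using j assms(4) strict_monoD[OF assms(1), of "k - 1" k] by simp
  then have "j \<le> k - 1" using strict_mono_less[OF assms(2)] by fastforce
  then show "f (k - 1) \<le> g (k - 1)" using j strict_mono_less_eq[OF assms(2)] by metis
qed

lemma strict_mono_range_subset_base:
  fixes f g :: "int \<Rightarrow> 'a::linorder"
  assumes "strict_mono g" "range f \<subseteq> range g" "f 0 < c" "c < g 1"
  shows "f 0 \<le> g 0"
proof -
  obtain j where j: "f 0 = g j" using assms(2) by blast
  then have "j < 1" using assms(3,4) strict_mono_less_eq[OF assms(1), of 1 j] by fastforce
  then show ?thesis using j strict_mono_less_eq[OF assms(1)] by fastforce
qed

lemma strict_mono_enumeration_unique:
  fixes f g :: "int \<Rightarrow> 'a::linorder"
  assumes "strict_mono f" "strict_mono g" "range f = range g"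
    and "f 0 < c" "c < f 1" "g 0 < c" "c < g 1"
  shows "f = g"
proof
  fix k
  show "f k = g k"
  proof (induction k rule: int_induct[where k = 0])
    case base
    show ?case
      using strict_mono_range_subset_base[of g f] strict_mono_range_subset_base[of f g] assms
      by (simp add: order.antisym)
  next
    case (step1 i)
    then show ?case
      using strict_mono_range_subset_next(1)[of f g i] strict_mono_range_subset_next(1)[of g f i] assms
      by (simp add: order.antisym)
  next
    case (step2 i)
    then show ?case
      using strict_mono_range_subset_next(2)[of f g i] strict_mono_range_subset_next(2)[of g f i] assms
      by (simp add: order.antisym)
  qed
qed

lemma sorted_wrt_less_nth_le_iff:
  fixes xs :: "'a::linorder list"
  assumes "sorted_wrt (<) xs" "i < length xs" "j < length xs"
  shows "xs ! j \<le> xs ! i \<longleftrightarrow> j \<le> i"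
  using assms sorted_wrt_nth_less[OF assms(1), of i j] sorted_wrt_nth_less[OF assms(1), of j i]
  by (cases i j rule: linorder_cases) auto

text \<open>Enumerates \<open>set xs + 2\<pi>\<int>\<close> with \<open>xs ! 0\<close> at index 1, as eigenangles are indexed.\<close>
definition periodic_enum :: "real list \<Rightarrow> int \<Rightarrow> real" where
  "periodic_enum xs k =
     xs ! nat ((k - 1) mod length xs) + 2 * pi * of_int ((k - 1) div length xs)"

lemma periodic_enum_index:
  fixes m :: int
  assumes "i < length xs"
  shows "periodic_enum xs (length xs * m + i + 1) = xs ! i + 2 * pi * of_int m"
proof -
  have "0 < length xs" using assms by linarith
  then have "(length xs * m + i) mod length xs = i" "(length xs * m + i) div length xs = m"
    using assms by simp_all
  then show ?thesis by (simp add: periodic_enum_def)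
qed

lemma periodic_enum_index_cases:
  assumes "xs \<noteq> []"
  obtains m :: int and i where "i < length xs" "k = length xs * m + int i + 1"
proof
  show "nat ((k - 1) mod length xs) < length xs"
    using assms by (simp add: nat_less_iff)
  show "k = length xs * ((k - 1) div length xs) + int (nat ((k - 1) mod length xs)) + 1"
    using assms by simp
qed

context
  fixes xs :: "real list"
  assumes sorted: "sorted_wrt (<) xs" and bounds: "set xs \<subseteq> {0<..<2 * pi}"
    and nonempty: "xs \<noteq> []"
begin

lemma nth_bounds: "i < length xs \<Longrightarrow> 0 < xs ! i \<and> xs ! i < 2 * pi"
  using bounds nth_mem by fastforce

lemma periodic_enum_less_Suc: "periodic_enum xs k < periodic_enum xs (k + 1)"
proof -
  obtain m i where i: "i < length xs" and k: "k = int (length xs) * m + int i + 1"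
    using periodic_enum_index_cases[OF nonempty] .
  show ?thesis
  proof (cases "i + 1 < length xs")
    case True
    have "xs ! i < xs ! (i + 1)" using sorted True by (simp add: sorted_wrt_iff_nth_less)
    moreover have "k + 1 = int (length xs) * m + int (i + 1) + 1" using k by simp
    ultimately show ?thesis
      using periodic_enum_index[OF True, of m] periodic_enum_index[OF i, of m] k by simp
  next
    case False
    then have "k + 1 = length xs * (m + 1) + int 0 + 1" using i k by (simp add: algebra_simps)
    then have "periodic_enum xs (k + 1) = xs ! 0 + 2 * pi * of_int (m + 1)"
      using periodic_enum_index[of 0 xs "m + 1"] nonempty by simp
    moreover have "periodic_enum xs k = xs ! i + 2 * pi * of_int m"
      using periodic_enum_index[OF i, of m] k by simp
    moreover have "xs ! i < 2 * pi" "0 < xs ! 0" using nth_bounds i nonempty by auto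
    ultimately show ?thesis by (simp add: algebra_simps)
  qed
qed

lemma strict_mono_periodic_enum: "strict_mono (periodic_enum xs)"
proof (rule strict_monoI)
  fix k l :: int
  assume "k < l"
  then show "periodic_enum xs k < periodic_enum xs l"
  proof (induction l rule: int_gr_induct)
    case base then show ?case by (rule periodic_enum_less_Suc)
  next
    case (step l) then show ?case using periodic_enum_less_Suc[of l] by simp
  qed
qed

lemma range_periodic_enum:
  "range (periodic_enum xs) = {x + 2 * pi * of_int m | x m. x \<in> set xs}"
proof (intro equalityI subsetI)
  fix t assume "t \<in> range (periodic_enum xs)"
  then obtain k where "t = periodic_enum xs k" by blast
  moreover obtain m i where "i < length xs" "k = int (length xs) * m + int i + 1"
    using periodic_enum_index_cases[OF nonempty] .
  ultimately show "t \<in> {x + 2 * pi * of_int m | x m. x \<in> set xs}"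
    using periodic_enum_index by auto
next
  fix t assume "t \<in> {x + 2 * pi * of_int m | x m. x \<in> set xs}"
  then obtain i m where "i < length xs" "t = xs ! i + 2 * pi * of_int m"
    by (auto simp: in_set_conv_nth)
  then show "t \<in> range (periodic_enum xs)"
    using periodic_enum_index by (metis rangeI)
qed

lemma periodic_enum_0: "periodic_enum xs 0 < 0"
proof -
  have i: "length xs - 1 < length xs" using nonempty by simp
  moreover have "int (length xs) * (-1) + int (length xs - 1) + 1 = 0"
    using i by linarith
  ultimately show ?thesis
    using periodic_enum_index[OF i, of "-1"] nth_bounds[OF i] by auto
qed

lemma periodic_enum_1: "0 < periodic_enum xs 1"
proof -
  have "0 < length xs" using nonempty by simp
  from periodic_enum_index[OF this, of 0] nth_bounds[OF this]
  show ?thesis by auto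
qed

end

section \<open>Continuous logarithms on the complement of outer rays\<close>

lemma continuous_logarithm_unique:
  fixes f g :: "'a::topological_space \<Rightarrow> complex"
  assumes "connected S" "continuous_on S f" "continuous_on S g"
    and "\<And>x. x \<in> S \<Longrightarrow> exp (f x) = exp (g x)" and "a \<in> S" "f a = g a" and "x \<in> S"
  shows "f x = g x"
proof -
  have periods: "\<exists>n::int. f x - g x = complex_of_real (2 * pi * of_int n) * \<i>" if "x \<in> S" for x
  proof -
    have "exp (f x - g x) = 1" using assms(4)[OF that] by (simp add: exp_diff)
    then obtain n :: int where "Re (f x - g x) = 0" "Im (f x - g x) = of_int (2 * n) * pi"
      by (auto simp: exp_eq_1)
    then show ?thesis by (intro exI[of _ n]) (simp add: complex_eq_iff)
  qed
  have "(\<lambda>x. f x - g x) constant_on S"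
  proof (rule continuous_discrete_range_constant)
    show "continuous_on S (\<lambda>x. f x - g x)" using assms(2,3) by (rule continuous_on_diff)
    fix x assume "x \<in> S"
    show "\<exists>e>0. \<forall>y. y \<in> S \<and> f y - g y \<noteq> f x - g x \<longrightarrow> e \<le> norm (f y - g y - (f x - g x))"
    proof (intro exI[of _ "2 * pi"] conjI allI impI)
      fix y assume y: "y \<in> S \<and> f y - g y \<noteq> f x - g x"
      obtain m n :: int where m: "f x - g x = complex_of_real (2 * pi * of_int m) * \<i>"
        and n: "f y - g y = complex_of_real (2 * pi * of_int n) * \<i>"
        using periods \<open>x \<in> S\<close> y by meson
      then have "m \<noteq> n" using y by auto
      then have "1 \<le> \<bar>of_int n - of_int m :: real\<bar>" by linarith
      moreover have "f y - g y - (f x - g x) = complex_of_real (2 * pi * (of_int n - of_int m)) * \<i>"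
        unfolding m n by (simp add: algebra_simps)
      then have "norm (f y - g y - (f x - g x)) = 2 * pi * \<bar>of_int n - of_int m\<bar>"
        by (simp only: norm_mult norm_of_real norm_ii) (simp add: abs_mult)
      ultimately show "2 * pi \<le> norm (f y - g y - (f x - g x))"
        using mult_left_mono[of 1 "\<bar>of_int n - of_int m :: real\<bar>" "2 * pi"] pi_ge_zero
    by linarith
    qed simp
  qed (use assms in simp)
  then obtain c where c: "\<And>x. x \<in> S \<Longrightarrow> f x - g x = c" by (auto simp: constant_on_def)
  have "c = 0" using c[OF assms(5)] assms(6) by simp
  then show ?thesis using c[OF assms(7)] by simp
qed

definition outer_rays :: "complex set \<Rightarrow> complex set" where
  "outer_rays W = {complex_of_real r * w | r w. 1 \<le> r \<and> w \<in> W}"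

lemma subset_outer_rays: "W \<subseteq> outer_rays W"
  unfolding outer_rays_def by force

lemma zero_notin_outer_rays: "0 \<notin> W \<Longrightarrow> 0 \<notin> outer_rays W"
  by (auto simp: outer_rays_def)

lemma starlike_compl_outer_rays:
  assumes "0 \<notin> W"
  shows "starlike (- outer_rays W)"
  unfolding starlike_def
proof (intro bexI ballI subsetI)
  show "0 \<in> - outer_rays W" using assms by (simp add: zero_notin_outer_rays)
  fix x u assume x: "x \<in> - outer_rays W" and "u \<in> closed_segment 0 x"
  then obtain t where t: "0 \<le> t" "t \<le> 1" "u = t *\<^sub>R x" by (auto simp: closed_segment_def)
  show "u \<in> - outer_rays W"
  proof
    assume "u \<in> outer_rays W"
    then obtain r w where rw: "1 \<le> r" "w \<in> W" "u = complex_of_real r * w"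
      by (auto simp: outer_rays_def)
    then have "t \<noteq> 0" using assms t by auto
    then have "x = complex_of_real (r / t) * w" "1 \<le> r / t"
      using rw t by (auto simp: scaleR_conv_of_real field_simps)
    then show False using x rw(2) by (auto simp: outer_rays_def)
  qed
qed

lemma one_minus_divide_notin_nonpos_Reals:
  assumes "w \<in> W" "z \<notin> outer_rays W"
  shows "1 - z / w \<notin> \<real>\<^sub>\<le>\<^sub>0"
proof
  assume "1 - z / w \<in> \<real>\<^sub>\<le>\<^sub>0"
  then obtain x where x: "1 - z / w = complex_of_real x" "x \<le> 0" by (rule nonpos_Reals_cases)
  then have "w \<noteq> 0" by auto
  with x have "z = complex_of_real (1 - x) * w" by (simp add: field_simps)
  moreover have "1 \<le> 1 - x" using x(2) by simp
  ultimately have "z \<in> outer_rays W" using assms(1) unfolding outer_rays_def by blast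
  then show False using assms(2) by blast
qed

lemma cis_in_outer_rays_iff:
  assumes "\<And>w. w \<in> W \<Longrightarrow> cmod w = 1"
  shows "cis t \<in> outer_rays W \<longleftrightarrow> cis t \<in> W"
proof
  assume "cis t \<in> outer_rays W"
  then obtain r w where rw: "1 \<le> r" "w \<in> W" "cis t = complex_of_real r * w"
    by (auto simp: outer_rays_def)
  have "1 = \<bar>r\<bar>" using arg_cong[OF rw(3), of norm] assms[OF rw(2)] by (simp add: norm_mult)
  then have "r = 1" using rw(1) by simp
  then show "cis t \<in> W" using rw by simp
qed (use subset_outer_rays in blast)

definition log_prod_roots :: "complex set \<Rightarrow> complex \<Rightarrow> complex" where
  "log_prod_roots W z = Ln (\<Prod>w\<in>W. - w) + (\<Sum>w\<in>W. Ln (1 - z / w))"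

lemma continuous_on_log_prod_roots:
  assumes "0 \<notin> W"
  shows "continuous_on (- outer_rays W) (log_prod_roots W)"
  using assms unfolding log_prod_roots_def
  by (intro continuous_intros continuous_on_Ln' one_minus_divide_notin_nonpos_Reals) auto

lemma exp_log_prod_roots:
  assumes "finite W" "0 \<notin> W" "z \<notin> outer_rays W"
  shows "exp (log_prod_roots W z) = (\<Prod>w\<in>W. z - w)"
proof -
  have "1 - z / w \<noteq> 0" if "w \<in> W" for w
    using one_minus_divide_notin_nonpos_Reals[OF that assms(3)] by auto
  then have "exp (log_prod_roots W z) = (\<Prod>w\<in>W. - w) * (\<Prod>w\<in>W. 1 - z / w)"
    using assms by (simp add: log_prod_roots_def exp_add exp_sum)
  also have "\<dots> = (\<Prod>w\<in>W. z - w)"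
    unfolding prod.distrib[symmetric] using assms(2) by (intro prod.cong) (auto simp: field_simps)
  finally show ?thesis .
qed

section \<open>Angles and the argument of \<open>1 - cis x\<close>\<close>

lemma cis_periodic: "cis (t + 2 * pi * of_int m) = cis t"
  by (simp add: cis_mult[symmetric])

lemma cis_eq_cis_iff: "cis s = cis t \<longleftrightarrow> (\<exists>m::int. t = s + 2 * pi * of_int m)"
proof
  assume "cis s = cis t"
  then have "sin t = sin s \<and> cos t = cos s" by (metis cis.sel)
  then show "\<exists>m::int. t = s + 2 * pi * of_int m" using sin_cos_eq_iff by blast
qed (auto simp: cis_periodic)

lemma inj_on_cis: "inj_on cis {0<..<2 * pi}"
proof (rule inj_onI)
  fix s t assume st: "s \<in> {0<..<2 * pi}" "t \<in> {0<..<2 * pi}" "cis s = cis t"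
  then obtain m :: int where m: "t = s + 2 * pi * of_int m" by (auto simp: cis_eq_cis_iff)
  then have "\<bar>2 * pi * of_int m\<bar> < 2 * pi" using st(1,2) by auto
  then have "m = 0" by (simp add: abs_mult)
  then show "s = t" using m by simp
qed

lemma angle_mod_2pi:
  obtains x m where "0 \<le> x" "x < 2 * pi" "t = x + 2 * pi * of_int (m :: int)"
proof
  show "0 \<le> 2 * pi * frac (t / (2 * pi))" "2 * pi * frac (t / (2 * pi)) < 2 * pi"
    by (simp_all add: frac_lt_1)
  show "t = 2 * pi * frac (t / (2 * pi)) + 2 * pi * of_int \<lfloor>t / (2 * pi)\<rfloor>"
    by (simp add: frac_def algebra_simps)
qed

lemma Im_Ln_one_minus_cis:
  assumes "0 < x" "x < 2 * pi"
  shows "Im (Ln (1 - cis x)) = (x - pi) / 2"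
proof -
  define y where "y = x / 2"
  have sin_pos: "sin y > 0" using assms by (simp add: y_def sin_gt_zero)
  have "x = 2 * y" by (simp add: y_def)
  then have factor: "1 - cis x = complex_of_real (2 * sin y) * cis (y - pi / 2)"
    by (simp add: complex_eq_iff cos_diff sin_diff cos_double_sin sin_double power2_eq_square)
  have "Ln (1 - cis x) = Ln (complex_of_real (2 * sin y)) + Ln (cis (y - pi / 2))"
    unfolding factor by (rule Ln_times_of_real) (use sin_pos in auto)
  moreover have "Ln (cis (y - pi / 2)) = complex_of_real (y - pi / 2) * \<i>"
    using assms by (intro Ln_cis) (auto simp: y_def)
  moreover have "Im (Ln (complex_of_real (2 * sin y))) = 0"
    using sin_pos by (intro Im_Ln_of_real) simp
  ultimately show ?thesis by (simp add: y_def diff_divide_distrib)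
qed

lemma Im_Ln_one_minus_cis_increment:
  assumes "0 < \<epsilon>" "\<epsilon> < b" "b < 2 * pi" "0 < a"
    and "a + \<epsilon> < b + (if b \<le> a then 2 * pi else 0)"
  shows "Im (Ln (1 - cis (a + \<epsilon> - b))) - Im (Ln (1 - cis (\<epsilon> - b)))
    = a / 2 - (if b \<le> a then pi else 0)"
proof -
  have "Im (Ln (1 - cis (\<epsilon> - b))) = (\<epsilon> - b + 2 * pi - pi) / 2"
    using Im_Ln_one_minus_cis[of "\<epsilon> - b + 2 * pi"] cis_periodic[of "\<epsilon> - b" 1] assms by simp
  moreover have "Im (Ln (1 - cis (a + \<epsilon> - b)))
      = (a + \<epsilon> - b + (if b \<le> a then 0 else 2 * pi) - pi) / 2"
    using Im_Ln_one_minus_cis[of "a + \<epsilon> - b + (if b \<le> a then 0 else 2 * pi)"]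
      cis_periodic[of "a + \<epsilon> - b" 1] assms by (auto split: if_splits)
  ultimately show ?thesis by (cases "b \<le> a") (simp_all add: field_simps)
qed

section \<open>Eigenangles of a unitary matrix with simple spectrum\<close>

locale unitary_simple_spectrum =
  fixes U :: "complex^'n^'n"
  assumes unitary: "unitary_mat U"
    and card_spectrum: "card {z. is_eigenvalue U z} = CARD('n)"
    and one_not_eigenvalue: "\<not> is_eigenvalue U 1"
begin

definition spectrum :: "complex set" where
  "spectrum = {z. is_eigenvalue U z}"

definition angles :: "real list" where
  "angles = sorted_list_of_set {t \<in> {0<..<2 * pi}. cis t \<in> spectrum}"

lemma finite_spectrum: "finite spectrum"
  using card_spectrum by (intro card_ge_0_finite) (simp add: spectrum_def)

lemma norm_spectrum: "w \<in> spectrum \<Longrightarrow> cmod w = 1"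
  using unitary_eigenvalue_norm[OF unitary] by (simp add: spectrum_def)

lemma zero_notin_spectrum: "0 \<notin> spectrum"
  using norm_spectrum by force

lemma charpoly_Z_eq_prod: "charpoly_Z U z = (\<Prod>w\<in>spectrum. z - w)"
proof -
  have "charpoly U = (\<Prod>w\<in>spectrum. [:- w, 1:])"
    using finite_spectrum card_spectrum charpoly_Z_eigenvalue
    by (intro charpoly_eq_prod_roots) (auto simp: spectrum_def charpoly_Z_def)
  then show ?thesis
    unfolding charpoly_Z_def poly_charpoly[symmetric] by (simp add: poly_prod)
qed

lemma set_angles: "set angles = {t \<in> {0<..<2 * pi}. cis t \<in> spectrum}"
proof -
  have "finite {t \<in> {0<..<2 * pi}. cis t \<in> spectrum}"
    by (rule finite_subset[OF _ finite_vimage_IntI[OF finite_spectrum inj_on_cis]]) auto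
  then show ?thesis by (simp add: angles_def)
qed

lemma angle_set_eq: "{t. cis t \<in> spectrum} = {x + 2 * pi * of_int m | x m. x \<in> set angles}"
proof (intro equalityI subsetI)
  fix t assume "t \<in> {t. cis t \<in> spectrum}"
  moreover obtain x m where "0 \<le> x" "x < 2 * pi" "t = x + 2 * pi * of_int (m :: int)"
    by (rule angle_mod_2pi)
  moreover have "x \<noteq> 0" using calculation one_not_eigenvalue by (auto simp: cis_periodic spectrum_def)
  ultimately show "t \<in> {x + 2 * pi * of_int m | x m. x \<in> set angles}"
    by (auto simp: set_angles cis_periodic)
qed (auto simp: set_angles cis_periodic)

lemma cis_Arg_spectrum: "w \<in> spectrum \<Longrightarrow> cis (Arg w) = w"
  using norm_spectrum zero_notin_spectrum cis_Arg[of w] by (auto simp: sgn_div_norm)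

lemma bij_betw_cis_set_angles: "bij_betw cis (set angles) spectrum"
proof (rule bij_betw_imageI)
  show "inj_on cis (set angles)" by (rule inj_on_subset[OF inj_on_cis]) (auto simp: set_angles)
  show "cis ` set angles = spectrum"
  proof (intro equalityI subsetI)
    fix w assume w: "w \<in> spectrum"
    then have "Arg w \<in> {t. cis t \<in> spectrum}" by (simp add: cis_Arg_spectrum)
    then obtain x m where "x \<in> set angles" "Arg w = x + 2 * pi * of_int m"
      unfolding angle_set_eq by blast
    then show "w \<in> cis ` set angles"
      using cis_Arg_spectrum[OF w] cis_periodic by (metis image_eqI)
  qed (auto simp: set_angles)
qed

lemma length_angles: "length angles = CARD('n)"
proof -
  have "length angles = card (set angles)" by (simp add: angles_def distinct_card)
  also have "\<dots> = card spectrum" by (rule bij_betw_same_card[OF bij_betw_cis_set_angles])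
  finally show ?thesis using card_spectrum by (simp add: spectrum_def)
qed

lemma sorted_angles: "sorted_wrt (<) angles"
  by (simp add: angles_def)

lemma angles_bounds: "set angles \<subseteq> {0<..<2 * pi}"
  by (auto simp: set_angles)

lemma angles_nonempty: "angles \<noteq> []"
  using length_angles by auto

lemma bij_betw_cis_nth_angles: "bij_betw (\<lambda>j. cis (angles ! j)) {..<CARD('n)} spectrum"
  using bij_betw_trans[OF bij_betw_nth[of angles "{..<length angles}" "set angles"]
      bij_betw_cis_set_angles] sorted_angles
  by (simp add: o_def length_angles strict_sorted_iff)

lemma eigenangle_eq: "eigenangle U = periodic_enum angles"
proof -
  note enum = strict_mono_periodic_enum periodic_enum_0 periodic_enum_1 range_periodic_enum
  note enum = enum[OF sorted_angles angles_bounds angles_nonempty]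
  have range: "range (periodic_enum angles) = {t. is_eigenvalue U (cis t)}"
    using enum(4) angle_set_eq by (simp add: spectrum_def)
  show ?thesis
    unfolding eigenangle_def
  proof (rule the_equality)
    fix f :: "int \<Rightarrow> real"
    assume "strict_mono f \<and> range f = {t. is_eigenvalue U (cis t)} \<and> f 0 < 0 \<and> 0 < f 1"
    then show "f = periodic_enum angles"
      using strict_mono_enumeration_unique[of f "periodic_enum angles" 0] enum range by auto
  qed (use enum range in auto)
qed

lemma range_eigenangle: "range (eigenangle U) = {t. cis t \<in> spectrum}"
  unfolding eigenangle_eq angle_set_eq
  by (rule range_periodic_enum[OF sorted_angles angles_bounds angles_nonempty])

lemma slit_domain_eq: "slit_domain U = - outer_rays spectrum"
proof -
  have image: "cis ` range (eigenangle U) = spectrum"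
  proof (intro equalityI subsetI)
    fix w assume "w \<in> spectrum"
    then show "w \<in> cis ` range (eigenangle U)"
      using cis_Arg_spectrum unfolding range_eigenangle by (metis image_eqI mem_Collect_eq)
  qed (auto simp: range_eigenangle)
  have "{complex_of_real r * cis (eigenangle U k) | r k. r \<ge> 1}
      = {complex_of_real r * w | r w. 1 \<le> r \<and> w \<in> cis ` range (eigenangle U)}"
    by blast
  then show ?thesis
    unfolding slit_domain_def outer_rays_def image by simp
qed

lemma cis_in_slit_domain: "t \<notin> range (eigenangle U) \<Longrightarrow> cis t \<in> slit_domain U"
  using cis_in_outer_rays_iff[OF norm_spectrum] by (simp add: slit_domain_eq range_eigenangle)

lemma logZ_eq: "logZ U = (\<lambda>z. if z \<in> slit_domain U then log_prod_roots spectrum z else 0)"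
  (is "_ = ?L")
proof -
  define D where "D = slit_domain U"
  have zero_D: "0 \<in> D"
    using zero_notin_spectrum by (simp add: D_def slit_domain_eq zero_notin_outer_rays)
  have "connected D"
    unfolding D_def slit_domain_eq
    by (rule starlike_imp_connected[OF starlike_compl_outer_rays[OF zero_notin_spectrum]])
  have cont: "continuous_on D ?L"
    using continuous_on_log_prod_roots[OF zero_notin_spectrum]
    by (rule continuous_on_cong[THEN iffD1, rotated 2]) (auto simp: D_def slit_domain_eq)
  have exp_L: "exp (?L z) = charpoly_Z U z" if "z \<in> D" for z
    using that exp_log_prod_roots[OF finite_spectrum zero_notin_spectrum]
    by (simp add: D_def slit_domain_eq charpoly_Z_eq_prod)
  have "cmod (charpoly_Z U 0) = 1"
    using norm_spectrum by (simp add: charpoly_Z_eq_prod prod_norm[symmetric])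
  moreover have "?L 0 = Ln (charpoly_Z U 0)"
    using zero_D by (simp add: D_def log_prod_roots_def charpoly_Z_eq_prod)
  moreover have "charpoly_Z U 0 \<noteq> 0"
    using exp_L[OF zero_D] by (metis exp_not_eq_zero)
  ultimately have L_0: "?L 0 = \<i> * complex_of_real (Im (?L 0))" "Im (?L 0) \<in> {-pi<..pi}"
    by (auto simp: complex_eq_iff mpi_less_Im_Ln Im_Ln_le_pi)
  show ?thesis
    unfolding logZ_def
  proof (rule the_equality)
    fix L assume L: "continuous_on (slit_domain U) L
      \<and> (\<forall>z\<in>slit_domain U. exp (L z) = charpoly_Z U z)
      \<and> (\<exists>t\<in>{-pi<..pi}. L 0 = \<i> * complex_of_real t)
      \<and> (\<forall>z. z \<notin> slit_domain U \<longrightarrow> L z = 0)"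
    then obtain t where t: "t \<in> {-pi<..pi}" "L 0 = \<i> * complex_of_real t" by blast
    have "L 0 = ?L 0"
    proof (rule exp_complex_eqI)
      show "\<bar>Im (L 0) - Im (?L 0)\<bar> < 2 * pi" using t L_0(2) by auto
      show "exp (L 0) = exp (?L 0)" using L exp_L zero_D by (simp add: D_def)
    qed
    then have "L z = ?L z" if "z \<in> D" for z
      using continuous_logarithm_unique[OF \<open>connected D\<close> _ cont _ zero_D _ that] L exp_L
      by (simp add: D_def)
    then show "L = ?L" using L by (auto simp: D_def)
  qed (use cont exp_L L_0 in \<open>auto simp: D_def\<close>)
qed

lemma eigenangle_index:
  "i < CARD('n) \<Longrightarrow>
    eigenangle U (int CARD('n) * m + int i + 1) = angles ! i + 2 * pi * of_int m"
  using periodic_enum_index[of i angles m] by (simp add: eigenangle_eq length_angles)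

lemma Im_logZ_cis_diff:
  assumes "cis s \<in> slit_domain U" "cis t \<in> slit_domain U"
  shows "Im (logZ U (cis t) - logZ U (cis s))
    = (\<Sum>j<CARD('n). Im (Ln (1 - cis (t - angles ! j))) - Im (Ln (1 - cis (s - angles ! j))))"
proof -
  have "Im (logZ U (cis t) - logZ U (cis s))
      = (\<Sum>w\<in>spectrum. Im (Ln (1 - cis t / w)) - Im (Ln (1 - cis s / w)))"
    using assms by (simp add: logZ_eq log_prod_roots_def sum_subtractf)
  also have "\<dots> = (\<Sum>j<CARD('n). Im (Ln (1 - cis t / cis (angles ! j)))
                                 - Im (Ln (1 - cis s / cis (angles ! j))))"
    by (rule sum.reindex_bij_betw[OF bij_betw_cis_nth_angles, symmetric])
  finally show ?thesis by (simp add: cis_divide)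
qed

context
  fixes \<epsilon> :: real and k :: int
  assumes eps_pos: "\<epsilon> > 0"
    and no_angle_near_0: "\<forall>j. eigenangle U j \<notin> {0..\<epsilon>}"
    and no_angle_after_k: "\<forall>j. eigenangle U j \<notin> {eigenangle U k<..eigenangle U k + \<epsilon>}"
begin

lemma arg_increment_factor:
  assumes "k = int CARD('n) * m + int i + 1" "i < CARD('n)" "j < CARD('n)"
  shows "Im (Ln (1 - cis (eigenangle U k + \<epsilon> - angles ! j)))
      - Im (Ln (1 - cis (\<epsilon> - angles ! j)))
    = angles ! i / 2 - (if j \<le> i then pi else 0)"
proof -
  define a b where "a = angles ! i" and "b = angles ! j"
  have theta_k: "eigenangle U k = a + 2 * pi * of_int m"
    using eigenangle_index[OF assms(2)] by (simp add: assms(1) a_def)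
  have ab: "0 < a" "a < 2 * pi" "0 < b" "b < 2 * pi"
    using nth_bounds[OF sorted_angles angles_bounds angles_nonempty] assms(2,3)
    by (auto simp: a_def b_def length_angles)
  have "b \<le> a \<longleftrightarrow> j \<le> i"
    using sorted_wrt_less_nth_le_iff[OF sorted_angles] assms(2,3)
    by (simp add: a_def b_def length_angles)
  have beyond: "eigenangle U k + \<epsilon> < t" if "t \<in> range (eigenangle U)" "eigenangle U k < t" for t
    using that no_angle_after_k by fastforce
  have "b = eigenangle U (int CARD('n) * 0 + int j + 1)"
    using eigenangle_index[OF assms(3), of 0] by (simp add: b_def)
  then have "\<epsilon> < b" using no_angle_near_0 ab by (metis atLeastAtMost_iff less_eq_real_def not_le)
  moreover have "a + \<epsilon> < b + (if b \<le> a then 2 * pi else 0)"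
  proof -
    \<comment> \<open>\<open>b + 2\<pi>m'\<close> is the first eigenangle of the class of \<open>b\<close> beyond \<open>\<theta>\<^sub>k\<close>\<close>
    define m' where "m' = (if b \<le> a then m + 1 else m)"
    have "b + 2 * pi * of_int m' = eigenangle U (int CARD('n) * m' + int j + 1)"
      using eigenangle_index[OF assms(3)] by (simp add: b_def)
    moreover have "eigenangle U k < b + 2 * pi * of_int m'"
      using ab by (auto simp: theta_k m'_def algebra_simps)
    ultimately have "eigenangle U k + \<epsilon> < b + 2 * pi * of_int m'"
      using beyond by (metis rangeI)
    then show ?thesis by (auto simp: theta_k m'_def algebra_simps)
  qed
  moreover have "cis (eigenangle U k + \<epsilon> - b) = cis (a + \<epsilon> - b)"
    using cis_periodic[of "a + \<epsilon> - b" m] by (simp add: theta_k algebra_simps)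
  ultimately show ?thesis
    using Im_Ln_one_minus_cis_increment[OF eps_pos _ ab(4,1)] \<open>b \<le> a \<longleftrightarrow> j \<le> i\<close>
    by (simp add: a_def b_def)
qed

lemma index_eq_renorm_eigenangle_minus_arg_increment:
  "real_of_int k = renorm_eigenangle U k
     - (1 / pi) * Im (logZ U (cis (eigenangle U k + \<epsilon>)) - logZ U (cis \<epsilon>))"
proof -
  obtain m i where i: "i < CARD('n)" and k: "k = int CARD('n) * m + int i + 1"
    using periodic_enum_index_cases[OF angles_nonempty] by (metis length_angles)
  define a where "a = angles ! i"
  have theta_k: "eigenangle U k = a + 2 * pi * of_int m"
    using eigenangle_index[OF i] by (simp add: k a_def)
  have "cis \<epsilon> \<in> slit_domain U"
    using no_angle_near_0 eps_pos
    by (intro cis_in_slit_domain) (metis atLeastAtMost_iff imageE order_refl less_imp_le)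
  moreover have "cis (eigenangle U k + \<epsilon>) \<in> slit_domain U"
    using no_angle_after_k eps_pos
    by (intro cis_in_slit_domain) (metis greaterThanAtMost_iff imageE order_refl less_add_same_cancel1)
  ultimately have "Im (logZ U (cis (eigenangle U k + \<epsilon>)) - logZ U (cis \<epsilon>))
      = (\<Sum>j<CARD('n). Im (Ln (1 - cis (eigenangle U k + \<epsilon> - angles ! j)))
                         - Im (Ln (1 - cis (\<epsilon> - angles ! j))))"
    by (rule Im_logZ_cis_diff)
  also have "\<dots> = (\<Sum>j<CARD('n). a / 2 - (if j \<le> i then pi else 0))"
    by (intro sum.cong refl) (simp add: arg_increment_factor[OF k i] a_def)
  also have "\<dots> = CARD('n) * a / 2 - pi * (i + 1)"
  proof -
    have "{..<CARD('n)} \<inter> {j. j \<le> i} = {..i}" using i by auto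
    then show ?thesis by (simp add: sum_subtractf sum.If_cases)
  qed
  finally have increment: "Im (logZ U (cis (eigenangle U k + \<epsilon>)) - logZ U (cis \<epsilon>))
      = CARD('n) * a / 2 - pi * (i + 1)" .
  show ?thesis
    unfolding renorm_eigenangle_def increment unfolding theta_k
    using pi_gt_zero by (simp add: k field_simps)
qed

end

end

theorem corollary2p1:
  fixes U :: "complex^'n^'n" and k :: int and \<epsilon> :: real
  assumes "unitary_mat U"
    and "card {z. is_eigenvalue U z} = CARD('n)"
    and "\<not> is_eigenvalue U 1"
    and "\<epsilon> > 0"
    and "\<forall>j. eigenangle U j \<notin> {0..\<epsilon>}"
    and "\<forall>j. eigenangle U j \<notin> {eigenangle U k<..eigenangle U k + \<epsilon>}"
  shows "real_of_int k = renorm_eigenangle U k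
           - (1 / pi) * Im (logZ U (cis (eigenangle U k + \<epsilon>)) - logZ U (cis \<epsilon>))"
proof -
  interpret unitary_simple_spectrum U using assms(1-3) by unfold_locales
  show ?thesis using index_eq_renorm_eigenangle_minus_arg_increment assms(4-6) by blast
qed
end
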